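(* There exists a randomized $O(k^2\log k)$-competitive online algorithm for the generalized $k$-server problem in uniform metrics; that is, there is an absolute constant $C$ such that for every $k\ge 2$ and all uniform metrics $M_1,\dots,M_k$ there is a randomized online algorithm which is $C k^2\log k$-competitive.
   Context: Generalized $k$-server problem in uniform metrics: given uniform metric spaces $M_1,\dots,M_k$, where $M_i$ has $n_i\ge 2$ points at pairwise distance $1$, server $s_i$ starts at a fixed point of $M_i$ and always stays in $M_i$. Requests arrive online as $k$-tuples $(r_1,\dots,r_k)\in\prod_i M_i$; to serve a request an algorithm moves servers so that $s_i$ is at $r_i$ for at least one $i$, before seeing the next request. The cost is the total distance traveled by all servers. A randomized online algorithm $\mathrm{ALG}$ is $\beta$-competitive if there is a constant $\gamma$ (possibly depending on $k$ but not on the request sequence) such that for every input $I$, $\mathbf{E}[\mathrm{ALG}(I)]\le \beta\cdot\mathrm{OPT}(I)+\gamma$, where $\mathrm{OPT}(I)$ is the optimal offline cost. *)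

theory Defs
  imports "HOL-Probability.Probability"
begin

text \<open>Metric M_i is modelled as the point set
  {0..<n i} with all pairwise distances 1. A configuration (and a request) is a function
  c :: nat => nat, of which only the coordinates i < k matter.\<close>

type_synonym gconf = "nat \<Rightarrow> nat"

definition valid_conf :: "nat \<Rightarrow> (nat \<Rightarrow> nat) \<Rightarrow> gconf \<Rightarrow> bool" where
  "valid_conf k n c \<longleftrightarrow> (\<forall>i<k. c i < n i)"

definition serves :: "nat \<Rightarrow> gconf \<Rightarrow> gconf \<Rightarrow> bool" where
  "serves k r c \<longleftrightarrow> (\<exists>i<k. c i = r i)"

definition cdist :: "nat \<Rightarrow> gconf \<Rightarrow> gconf \<Rightarrow> real" where
  "cdist k c c' = real (card {i. i < k \<and> c i \<noteq> c' i})"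

fun path_cost :: "nat \<Rightarrow> gconf \<Rightarrow> gconf list \<Rightarrow> real" where
  "path_cost k c [] = 0"
| "path_cost k c (c' # cs) = cdist k c c' + path_cost k c' cs"

text \<open>A randomized online algorithm (behavioural form): given the requests seen so far
  (the last one being the current request) and its own previous configurations, it chooses
  the next configuration according to a probability distribution.\<close>
type_synonym ralg = "gconf list \<Rightarrow> gconf list \<Rightarrow> gconf pmf"

definition online_alg :: "nat \<Rightarrow> (nat \<Rightarrow> nat) \<Rightarrow> ralg \<Rightarrow> bool" where
  "online_alg k n A \<longleftrightarrow>
     (\<forall>rs cs. rs \<noteq> [] \<longrightarrow> (\<forall>r\<in>set rs. valid_conf k n r) \<longrightarrow> length cs = length rs - 1 \<longrightarrow>
        (\<forall>c\<in>set_pmf (A rs cs). valid_conf k n c \<and> serves k (last rs) c))"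

primrec traj :: "ralg \<Rightarrow> gconf list \<Rightarrow> nat \<Rightarrow> gconf list pmf" where
  "traj A rs 0 = return_pmf []"
| "traj A rs (Suc t) =
     bind_pmf (traj A rs t) (\<lambda>cs. map_pmf (\<lambda>c. cs @ [c]) (A (take (Suc t) rs) cs))"

definition alg_cost :: "nat \<Rightarrow> gconf \<Rightarrow> ralg \<Rightarrow> gconf list \<Rightarrow> real" where
  "alg_cost k s0 A rs = measure_pmf.expectation (traj A rs (length rs)) (path_cost k s0)"

definition opt_cost :: "nat \<Rightarrow> (nat \<Rightarrow> nat) \<Rightarrow> gconf \<Rightarrow> gconf list \<Rightarrow> real" where
  "opt_cost k n s0 rs = Inf {path_cost k s0 cs | cs. length cs = length rs \<and>
      (\<forall>t<length rs. valid_conf k n (cs ! t) \<and> serves k (rs ! t) (cs ! t))}"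

definition competitive :: "nat \<Rightarrow> (nat \<Rightarrow> nat) \<Rightarrow> gconf \<Rightarrow> ralg \<Rightarrow> real \<Rightarrow> bool" where
  "competitive k n s0 A \<beta> \<longleftrightarrow>
     (\<exists>\<gamma>::real. \<forall>rs. (\<forall>r\<in>set rs. valid_conf k n r) \<longrightarrow>
        alg_cost k s0 A rs \<le> \<beta> * opt_cost k n s0 rs + \<gamma>)"

end

(* Fix an order p of the k servers and follow it deterministically: if no server fixed so far
   serves the request, move the next server of p to the request and fix it; p dies when a request
   arrives after all k servers are fixed.  A phase ends when all k! orders have died.  The
   algorithm draws one uniformly random ranking of the k! orders and always follows the first
   order of the ranking that is still alive in the current phase.

   With the number of fixed servers as potential, following an order has amortized cost 0 and every
   switch to a new order costs at most 2k.  When the alive set shrinks from A to A', the followed order dies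
   with probability |A - A'| / |A| <= ln |A| - ln |A'|, so a phase has at most 1 + ln k! <= 1 + k ln k
   switches in expectation.  Conversely, a configuration serving all requests of a phase and the
   request that ends it would keep some order alive, so every solution moves at least once per
   completed phase. *)

theory Submission
  imports Defs "HOL-Combinatorics.Multiset_Permutations" "HOL-Combinatorics.Transposition"
    "HOL-Analysis.Harmonic_Numbers"
begin

section \<open>The first element of a random permutation lying in a set\<close>

(* The default SOME x. x \<in> A makes first_in xs A \<in> A hold for every xs (A nonempty), which
   matters because the algorithm may be handed an arbitrary list as its ranking. *)
definition first_in :: "'a list \<Rightarrow> 'a set \<Rightarrow> 'a" where
  "first_in xs A = hd (filter (\<lambda>x. x \<in> A) xs @ [SOME x. x \<in> A])"

lemma first_in_mem: "A \<noteq> {} \<Longrightarrow> first_in xs A \<in> A"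
proof (cases "filter (\<lambda>x. x \<in> A) xs")
  case Nil
  then show "A \<noteq> {} \<Longrightarrow> ?thesis" by (simp add: first_in_def some_in_eq)
next
  case (Cons y ys)
  then have "y \<in> set (filter (\<lambda>x. x \<in> A) xs)" by simp
  then have "y \<in> A" by simp
  then show ?thesis using Cons by (simp add: first_in_def)
qed

lemma first_in_Cons: "first_in (x # xs) A = (if x \<in> A then x else first_in xs A)"
  by (simp add: first_in_def)

lemma first_in_subset:
  assumes "B \<subseteq> A" "first_in xs A \<in> B" "B \<inter> set xs \<noteq> {}"
  shows "first_in xs B = first_in xs A"
  using assms(2,3)
proof (induction xs)
  case (Cons x xs)
  show ?case
  proof (cases "x \<in> A")
    case False
    then have "x \<notin> B" using assms(1) by blast
    then show ?thesis using False Cons by (simp add: first_in_Cons)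
  qed (use Cons.prems in \<open>simp add: first_in_Cons\<close>)
qed simp

lemma first_in_map:
  assumes "A \<inter> set xs \<noteq> {}" "\<And>x. f x \<in> A \<longleftrightarrow> x \<in> A"
  shows "first_in (map f xs) A = f (first_in xs A)"
  using assms(1)
proof (induction xs)
  case (Cons x xs)
  then show ?case using assms(2) by (auto simp: first_in_Cons)
qed simp

lemma card_first_in_eq:
  assumes "A \<subseteq> X" "a \<in> A" "b \<in> A"
  shows "card {xs \<in> permutations_of_set X. first_in xs A = a} =
         card {xs \<in> permutations_of_set X. first_in xs A = b}"
proof -
  let ?\<tau> = "Transposition.transpose a b"
  let ?S = "\<lambda>c. {xs \<in> permutations_of_set X. first_in xs A = c}"
  have "a \<in> X" "b \<in> X" using assms by auto
  then have perm: "map ?\<tau> xs \<in> permutations_of_set X" if "xs \<in> permutations_of_set X" for xs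
    using that by (auto simp: permutations_of_set_def distinct_map)
  have "?\<tau> x \<in> A \<longleftrightarrow> x \<in> A" for x
    using assms(2,3) by (cases "x = a"; cases "x = b") auto
  moreover have "A \<inter> set xs \<noteq> {}" if "xs \<in> permutations_of_set X" for xs
    using that assms(1,2) by (auto dest: permutations_of_setD)
  ultimately have first: "first_in (map ?\<tau> xs) A = ?\<tau> (first_in xs A)"
    if "xs \<in> permutations_of_set X" for xs
    using that by (intro first_in_map) auto
  have maps: "map ?\<tau> xs \<in> ?S (?\<tau> c)" if "xs \<in> ?S c" for xs c
    using that perm first by auto
  have image: "map ?\<tau> ` ?S a = ?S b"
  proof (intro equalityI subsetI)
    fix ys assume "ys \<in> map ?\<tau> ` ?S a"
    then obtain xs where "xs \<in> ?S a" "ys = map ?\<tau> xs" by blast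
    then show "ys \<in> ?S b" using maps[of xs a] by simp
  next
    fix ys assume "ys \<in> ?S b"
    then have "map ?\<tau> ys \<in> ?S a" using maps[of ys b] by simp
    moreover have "ys = map ?\<tau> (map ?\<tau> ys)" by (simp add: comp_def)
    ultimately show "ys \<in> map ?\<tau> ` ?S a" by (rule rev_image_eqI)
  qed
  have "inj_on (map ?\<tau>) (?S a)"
    by (meson inj_mapI inj_on_subset inj_transpose subset_UNIV)
  from card_image[OF this] show ?thesis unfolding image by simp
qed

(* In probabilistic terms: the first element in A of a uniformly random permutation of X is
   uniformly distributed on A. *)
lemma card_first_in_mem:
  assumes "A \<subseteq> X" "A \<noteq> {}" "B \<subseteq> A" "finite X"
  shows "card {xs \<in> permutations_of_set X. first_in xs A \<in> B} * card A =
         card B * card (permutations_of_set X)"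
proof -
  let ?S = "\<lambda>a. {xs \<in> permutations_of_set X. first_in xs A = a}"
  obtain a where a: "a \<in> A" using assms(2) by blast
  have fin: "finite A" using assms(1,4) finite_subset by blast
  have count: "card {xs \<in> permutations_of_set X. first_in xs A \<in> C} = card C * card (?S a)"
    if "C \<subseteq> A" for C
  proof -
    have "{xs \<in> permutations_of_set X. first_in xs A \<in> C} = (\<Union>c\<in>C. ?S c)" by auto
    also have "card \<dots> = (\<Sum>c\<in>C. card (?S c))"
      using that fin by (intro card_UN_disjoint) (auto intro: finite_subset)
    also have "\<dots> = card C * card (?S a)"
      using that card_first_in_eq[OF assms(1) _ a] by (simp add: subset_eq)
    finally show ?thesis .
  qed
  have "{xs \<in> permutations_of_set X. first_in xs A \<in> A} = permutations_of_set X"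
    using first_in_mem[OF assms(2)] by blast
  then have "card (permutations_of_set X) = card A * card (?S a)"
    using count[OF order_refl] by (simp only:)
  then show ?thesis using count[OF assms(3)] by (simp only: ac_simps)
qed

section \<open>Following a fixed order of the servers\<close>

(* Some (j, f): the first j servers of the order are fixed, f gives their positions;
   None: the order has died. *)
type_synonym follow_state = "(nat \<times> gconf) option"

definition follow_step :: "nat list \<Rightarrow> gconf \<Rightarrow> follow_state \<Rightarrow> follow_state" where
  "follow_step p r st = (case st of None \<Rightarrow> None | Some (j, f) \<Rightarrow>
     if \<exists>l<j. f (p ! l) = r (p ! l) then Some (j, f)
     else if j < length p then Some (Suc j, f(p ! j := r (p ! j))) else None)"

definition follow :: "nat list \<Rightarrow> gconf list \<Rightarrow> follow_state" where
  "follow p Q = fold (follow_step p) Q (Some (0, \<lambda>_. 0))"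

lemma follow_Nil [simp]: "follow p [] = Some (0, \<lambda>_. 0)"
  by (simp add: follow_def)

lemma follow_snoc [simp]: "follow p (Q @ [r]) = follow_step p r (follow p Q)"
  by (simp add: follow_def)

lemma follow_step_None [simp]: "follow_step p r None = None"
  by (simp add: follow_step_def)

lemma follow_step_SomeE:
  assumes "follow_step p r (Some (j, f)) = Some (j', f')"
  obtains (served) "\<exists>l<j. f (p ! l) = r (p ! l)" "j' = j" "f' = f"
  | (fixed) "\<not> (\<exists>l<j. f (p ! l) = r (p ! l))" "j < length p" "j' = Suc j"
      "f' = f(p ! j := r (p ! j))"
proof (cases "\<exists>l<j. f (p ! l) = r (p ! l)")
  case True
  with assms have "j' = j" "f' = f" by (simp_all add: follow_step_def)
  with True show ?thesis by (rule served)
next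
  case False
  with assms have "j < length p" "j' = Suc j" "f' = f(p ! j := r (p ! j))"
    by (simp_all add: follow_step_def split: if_splits)
  with False show ?thesis by (rule fixed)
qed

lemma follow_fixed_le_length: "follow p Q = Some (j, f) \<Longrightarrow> j \<le> length p"
proof (induction Q arbitrary: j f rule: rev_induct)
  case (snoc r Q)
  then obtain j0 f0 where Q: "follow p Q = Some (j0, f0)" by (cases "follow p Q") auto
  with snoc.prems have "follow_step p r (Some (j0, f0)) = Some (j, f)" by simp
  then show ?case by (cases rule: follow_step_SomeE) (use snoc.IH[OF Q] in auto)
qed simp

lemma follow_fixed_from_request:
  assumes "follow p Q = Some (j, f)" "i \<in> set (take j p)"
  shows "\<exists>q\<in>set Q. f i = q i"
  using assms
proof (induction Q arbitrary: j f rule: rev_induct)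
  case (snoc r Q)
  then obtain j0 f0 where Q: "follow p Q = Some (j0, f0)" by (cases "follow p Q") auto
  with snoc.prems(1) have "follow_step p r (Some (j0, f0)) = Some (j, f)" by simp
  then show ?case
  proof (cases rule: follow_step_SomeE)
    case fixed
    then have "set (take j p) = insert (p ! j0) (set (take j0 p))"
      by (simp add: take_Suc_conv_app_nth)
    then show ?thesis using fixed snoc.IH[OF Q] snoc.prems(2) by auto
  qed (use snoc.IH[OF Q] snoc.prems(2) in auto)
qed simp

lemma follow_step_serves:
  assumes "follow_step p r st = Some (j, f)"
  shows "\<exists>l<j. f (p ! l) = r (p ! l)"
proof -
  obtain j0 f0 where st: "st = Some (j0, f0)" using assms by (cases st) auto
  from assms[unfolded st] show ?thesis
    by (cases rule: follow_step_SomeE) auto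
qed

abbreviation server_orders :: "nat \<Rightarrow> nat list set" where
  "server_orders k \<equiv> permutations_of_set {0..<k}"

abbreviation serves_all :: "nat \<Rightarrow> gconf list \<Rightarrow> gconf \<Rightarrow> bool" where
  "serves_all k Q c \<equiv> \<forall>q\<in>set Q. serves k q c"

(* The order is completed greedily: a request not served by the fixed servers is served by x at
   some server outside p, and that server is fixed next. *)
lemma exists_surviving_extension:
  assumes "serves_all k Q x" "distinct p" "set p \<subseteq> {0..<k}" "\<forall>i\<in>set p. f i = x i"
  shows "\<exists>rest. p @ rest \<in> server_orders k \<and>
           fold (follow_step (p @ rest)) Q (Some (length p, f)) \<noteq> None"
  using assms
proof (induction Q arbitrary: p f)
  case Nil
  let ?rest = "filter (\<lambda>i. i \<notin> set p) [0..<k]"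
  have "set (p @ ?rest) = {0..<k}" "distinct (p @ ?rest)" using Nil.prems(2,3) by auto
  then show ?case by (intro exI[of _ ?rest]) auto
next
  case (Cons r Q)
  then have Q: "serves_all k Q x" by simp
  show ?case
  proof (cases "\<exists>l<length p. f (p ! l) = r (p ! l)")
    case True
    from Cons.IH[OF Q Cons.prems(2-4)] obtain rest where rest: "p @ rest \<in> server_orders k"
      "fold (follow_step (p @ rest)) Q (Some (length p, f)) \<noteq> None" by auto
    have "follow_step (p @ rest) r (Some (length p, f)) = Some (length p, f)"
      using True by (auto simp: follow_step_def nth_append)
    then show ?thesis using rest by auto
  next
    case False
    from Cons.prems(1) obtain i where i: "i < k" "x i = r i" by (auto simp: serves_def)
    have "i \<notin> set p"
      using False Cons.prems(4) i(2) by (metis in_set_conv_nth)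
    with Cons.prems i have "\<exists>rest. (p @ [i]) @ rest \<in> server_orders k \<and>
        fold (follow_step ((p @ [i]) @ rest)) Q (Some (length (p @ [i]), f(i := r i))) \<noteq> None"
      by (intro Cons.IH) auto
    then obtain rest where rest: "p @ i # rest \<in> server_orders k"
      "fold (follow_step (p @ i # rest)) Q (Some (Suc (length p), f(i := r i))) \<noteq> None"
      by auto
    have "follow_step (p @ i # rest) r (Some (length p, f)) = Some (Suc (length p), f(i := r i))"
      using False by (auto simp: follow_step_def nth_append)
    then show ?thesis using rest by (intro exI[of _ "i # rest"]) auto
  qed
qed

definition alive :: "nat \<Rightarrow> gconf list \<Rightarrow> nat list set" where
  "alive k Q = {p \<in> server_orders k. follow p Q \<noteq> None}"

lemma alive_nonempty: "serves_all k Q x \<Longrightarrow> alive k Q \<noteq> {}"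
  using exists_surviving_extension[of Q k x "[]"] by (auto simp: alive_def follow_def)

lemma alive_Nil: "alive k [] = server_orders k"
  by (simp add: alive_def)

lemma alive_snoc_subset: "alive k (Q @ [r]) \<subseteq> alive k Q"
proof
  fix p assume "p \<in> alive k (Q @ [r])"
  then show "p \<in> alive k Q" by (cases "follow p Q") (auto simp: alive_def)
qed

lemma finite_alive: "finite (alive k Q)"
  by (simp add: alive_def)

lemma card_alive_le: "card (alive k Q) \<le> fact k"
  using card_mono[OF finite_permutations_of_set, of "alive k Q" "{0..<k}"]
  by (auto simp: alive_def)

lemma serves_self: "k \<ge> 1 \<Longrightarrow> serves k r r"
  unfolding serves_def by (intro exI[of _ 0]) simp

definition new_phase :: "nat \<Rightarrow> gconf list \<Rightarrow> gconf \<Rightarrow> bool" where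
  "new_phase k P r \<longleftrightarrow> P = [] \<or> alive k (P @ [r]) = {}"

definition phases :: "nat \<Rightarrow> gconf list \<Rightarrow> nat \<times> gconf list" where
  "phases k rs = fold (\<lambda>r (m, P). if new_phase k P r then (Suc m, [r]) else (m, P @ [r])) rs (0, [])"

definition phase_count :: "nat \<Rightarrow> gconf list \<Rightarrow> nat" where
  "phase_count k rs = fst (phases k rs)"

definition current_phase :: "nat \<Rightarrow> gconf list \<Rightarrow> gconf list" where
  "current_phase k rs = snd (phases k rs)"

lemma phase_count_Nil [simp]: "phase_count k [] = 0"
  and current_phase_Nil [simp]: "current_phase k [] = []"
  by (simp_all add: phase_count_def current_phase_def phases_def)

lemma phase_count_snoc:
  "phase_count k (rs @ [r]) = phase_count k rs + of_bool (new_phase k (current_phase k rs) r)"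
  and current_phase_snoc:
  "current_phase k (rs @ [r]) =
     (if new_phase k (current_phase k rs) r then [r] else current_phase k rs @ [r])"
  by (simp_all add: phase_count_def current_phase_def phases_def split: prod.split)

lemma current_phase_eq_Nil_iff: "current_phase k rs = [] \<longleftrightarrow> rs = []"
  by (induction rs rule: rev_induct) (simp_all add: current_phase_snoc)

lemma set_current_phase_subset: "set (current_phase k rs) \<subseteq> set rs"
  by (induction rs rule: rev_induct) (auto simp: current_phase_snoc)

lemma alive_current_phase_nonempty:
  assumes "k \<ge> 1"
  shows "alive k (current_phase k rs) \<noteq> {}"
proof (induction rs rule: rev_induct)
  case Nil
  show ?case by (simp add: alive_Nil)
next
  case (snoc r rs)
  have "serves k r r" using assms by (rule serves_self)
  then have "alive k [r] \<noteq> {}" by (intro alive_nonempty[of _ _ r]) simp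
  then show ?case by (auto simp: current_phase_snoc new_phase_def)
qed

abbreviation rankings :: "nat \<Rightarrow> nat list list set" where
  "rankings k \<equiv> permutations_of_set (server_orders k)"

definition current_order :: "nat \<Rightarrow> nat list list \<Rightarrow> gconf list \<Rightarrow> nat list" where
  "current_order k \<rho> rs = first_in \<rho> (alive k (current_phase k rs))"

definition current_state :: "nat \<Rightarrow> nat list list \<Rightarrow> gconf list \<Rightarrow> nat \<times> gconf" where
  "current_state k \<rho> rs = the (follow (current_order k \<rho> rs) (current_phase k rs))"

lemma current_order_alive: "k \<ge> 1 \<Longrightarrow> current_order k \<rho> rs \<in> alive k (current_phase k rs)"
  unfolding current_order_def by (intro first_in_mem alive_current_phase_nonempty)

lemma follow_current_order:
  "k \<ge> 1 \<Longrightarrow> follow (current_order k \<rho> rs) (current_phase k rs) = Some (current_state k \<rho> rs)"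
  using current_order_alive[of k \<rho> rs] by (auto simp: current_state_def alive_def)

lemma current_state_le:
  assumes "k \<ge> 1"
  shows "fst (current_state k \<rho> rs) \<le> k"
proof -
  have "current_order k \<rho> rs \<in> server_orders k"
    using current_order_alive[OF assms] by (simp add: alive_def)
  then have "length (current_order k \<rho> rs) = k"
    by (simp add: length_finite_permutations_of_set)
  then show ?thesis
    using follow_fixed_le_length follow_current_order[OF assms] by (metis prod.collapse)
qed

definition move :: "nat \<Rightarrow> nat list list \<Rightarrow> gconf list \<Rightarrow> gconf \<Rightarrow> gconf" where
  "move k \<rho> rs c i = (case current_state k \<rho> rs of (j, f) \<Rightarrow>
     if i \<in> set (take j (current_order k \<rho> rs)) then f i else c i)"

definition conf :: "nat \<Rightarrow> gconf \<Rightarrow> nat list list \<Rightarrow> gconf list \<Rightarrow> gconf" where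
  "conf k s0 \<rho> rs = fold (\<lambda>t. move k \<rho> (take (Suc t) rs)) [0..<length rs] s0"

lemma conf_Nil [simp]: "conf k s0 \<rho> [] = s0"
  by (simp add: conf_def)

lemma conf_snoc: "conf k s0 \<rho> (rs @ [r]) = move k \<rho> (rs @ [r]) (conf k s0 \<rho> rs)"
proof -
  have "fold (\<lambda>t. move k \<rho> (take (Suc t) (rs @ [r]))) [0..<length rs] s0 = conf k s0 \<rho> rs"
    unfolding conf_def by (intro fold_cong) auto
  then show ?thesis by (simp add: conf_def)
qed

lemma conf_fixed:
  assumes "current_state k \<rho> rs = (j, f)" "i \<in> set (take j (current_order k \<rho> rs))" "rs \<noteq> []"
  shows "conf k s0 \<rho> rs i = f i"
proof -
  obtain rs' r where "rs = rs' @ [r]" using assms(3) by (cases rs rule: rev_exhaust) auto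
  then show ?thesis using assms(1,2) by (simp add: conf_snoc move_def)
qed

lemma conf_valid:
  assumes "k \<ge> 1" "valid_conf k n s0" "\<forall>r\<in>set rs. valid_conf k n r"
  shows "valid_conf k n (conf k s0 \<rho> rs)"
  using assms(3)
proof (induction rs rule: rev_induct)
  case (snoc r rs)
  obtain j f where state: "current_state k \<rho> (rs @ [r]) = (j, f)" by fastforce
  have "f i < n i" if i: "i < k" and fixed: "i \<in> set (take j (current_order k \<rho> (rs @ [r])))"
    for i
  proof -
    obtain q where "q \<in> set (current_phase k (rs @ [r]))" "f i = q i"
      using follow_fixed_from_request follow_current_order[OF assms(1)] state fixed by metis
    then show ?thesis
      using set_current_phase_subset snoc.prems i by (force simp: valid_conf_def)
  qed
  then show ?case using snoc state by (auto simp: valid_conf_def conf_snoc move_def)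
qed (simp add: assms(2))

lemma conf_serves:
  assumes "k \<ge> 1"
  shows "serves k r (conf k s0 \<rho> (rs @ [r]))"
proof -
  let ?p = "current_order k \<rho> (rs @ [r])"
  obtain j f where state: "current_state k \<rho> (rs @ [r]) = (j, f)" by fastforce
  obtain P where "current_phase k (rs @ [r]) = P @ [r]"
    by (metis append.left_neutral current_phase_snoc)
  then have "follow_step ?p r (follow ?p P) = Some (j, f)"
    using follow_current_order[OF assms, of \<rho> "rs @ [r]"] state by simp
  then obtain l where l: "l < j" "f (?p ! l) = r (?p ! l)"
    using follow_step_serves by blast
  have "j \<le> k" using current_state_le[OF assms, of \<rho> "rs @ [r]"] state by simp
  have "?p \<in> server_orders k"
    using current_order_alive[OF assms] by (simp add: alive_def)
  then have set_p: "set ?p = {0..<k}" and len: "length ?p = k"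
    by (simp_all add: permutations_of_set_def length_finite_permutations_of_set)
  have "?p ! l < k"
    using nth_mem[of l ?p] l(1) \<open>j \<le> k\<close> set_p len by auto
  moreover have "?p ! l \<in> set (take j ?p)"
    using l(1) \<open>j \<le> k\<close> len by (intro in_set_conv_nth[THEN iffD2] exI[of _ l]) auto
  ultimately show ?thesis
    using conf_fixed[OF state] l(2) unfolding serves_def by auto
qed

(* The ranking is drawn at the first request and stored in coordinate k of every configuration;
   only coordinates i < k belong to the metric, and later steps read the ranking back from the
   first configuration of the history. *)
definition alg_conf :: "nat \<Rightarrow> gconf \<Rightarrow> nat list list \<Rightarrow> gconf list \<Rightarrow> gconf" where
  "alg_conf k s0 \<rho> rs = (conf k s0 \<rho> rs)(k := to_nat \<rho>)"

definition rand_alg :: "nat \<Rightarrow> gconf \<Rightarrow> ralg" where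
  "rand_alg k s0 rs cs = map_pmf (\<lambda>\<rho>. alg_conf k s0 \<rho> rs)
     (if cs = [] then pmf_of_set (rankings k) else return_pmf (from_nat (hd cs k)))"

lemma valid_alg_conf: "valid_conf k n (alg_conf k s0 \<rho> rs) \<longleftrightarrow> valid_conf k n (conf k s0 \<rho> rs)"
  by (simp add: valid_conf_def alg_conf_def)

lemma serves_alg_conf: "serves k r (alg_conf k s0 \<rho> rs) \<longleftrightarrow> serves k r (conf k s0 \<rho> rs)"
  by (auto simp: serves_def alg_conf_def)

lemma rand_alg_online:
  assumes "k \<ge> 1" "valid_conf k n s0"
  shows "online_alg k n (rand_alg k s0)"
  unfolding online_alg_def
proof (intro allI impI ballI)
  fix rs cs c
  assume "rs \<noteq> []" "\<forall>r\<in>set rs. valid_conf k n r" "c \<in> set_pmf (rand_alg k s0 rs cs)"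
  moreover obtain \<rho> where "c = alg_conf k s0 \<rho> rs"
    using \<open>c \<in> set_pmf _\<close> by (auto simp: rand_alg_def split: if_splits)
  moreover obtain rs' r where "rs = rs' @ [r]" using \<open>rs \<noteq> []\<close> by (cases rs rule: rev_exhaust) auto
  ultimately show "valid_conf k n c \<and> serves k (last rs) c"
    using conf_valid[OF assms] conf_serves[OF assms(1)] by (simp add: valid_alg_conf serves_alg_conf)
qed

lemma traj_rand_alg:
  assumes "t \<le> length rs"
  shows "traj (rand_alg k s0) rs t =
     map_pmf (\<lambda>\<rho>. map (\<lambda>j. alg_conf k s0 \<rho> (take (Suc j) rs)) [0..<t]) (pmf_of_set (rankings k))"
  using assms
proof (induction t)
  case (Suc t)
  let ?U = "pmf_of_set (rankings k)"
  let ?G = "\<lambda>t \<rho>. map (\<lambda>j. alg_conf k s0 \<rho> (take (Suc j) rs)) [0..<t]"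
  have "traj (rand_alg k s0) rs (Suc t) =
      bind_pmf ?U (\<lambda>\<rho>. map_pmf (\<lambda>c. ?G t \<rho> @ [c]) (rand_alg k s0 (take (Suc t) rs) (?G t \<rho>)))"
    using Suc by (simp add: bind_map_pmf)
  also have "\<dots> = map_pmf (?G (Suc t)) ?U"
  proof (cases t)
    case 0
    then show ?thesis by (simp add: rand_alg_def map_pmf_comp bind_pmf_const)
  next
    case (Suc t')
    then have "hd (?G t \<rho>) k = to_nat \<rho>" for \<rho>
      by (simp add: hd_map alg_conf_def del: upt_Suc)
    then show ?thesis using Suc by (simp add: rand_alg_def map_pmf_def bind_return_pmf)
  qed
  finally show ?case .
qed (simp add: map_pmf_def)

section \<open>Expected cost of the algorithm\<close>

definition follow_cost :: "nat \<Rightarrow> gconf \<Rightarrow> nat list list \<Rightarrow> gconf list \<Rightarrow> real" where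
  "follow_cost k s0 \<rho> rs = path_cost k s0 (map (\<lambda>t. conf k s0 \<rho> (take (Suc t) rs)) [0..<length rs])"

lemma cdist_cong:
  assumes "\<And>i. i < k \<Longrightarrow> c i = c' i" "\<And>i. i < k \<Longrightarrow> d i = d' i"
  shows "cdist k c d = cdist k c' d'"
proof -
  have "{i. i < k \<and> c i \<noteq> d i} = {i. i < k \<and> c' i \<noteq> d' i}" using assms by (intro Collect_cong) auto
  then show ?thesis by (simp add: cdist_def)
qed

lemma path_cost_cong:
  "list_all2 (\<lambda>d d'. \<forall>i<k. d i = d' i) cs cs' \<Longrightarrow> \<forall>i<k. c i = c' i \<Longrightarrow>
     path_cost k c cs = path_cost k c' cs'"
proof (induction cs cs' arbitrary: c c' rule: list_all2_induct)
  case (Cons d ds d' ds')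
  then have "cdist k c d = cdist k c' d'" by (intro cdist_cong) auto
  with Cons show ?case by simp
qed simp

lemma alg_cost_rand_alg:
  "alg_cost k s0 (rand_alg k s0) rs = (\<Sum>\<rho>\<in>rankings k. follow_cost k s0 \<rho> rs) / card (rankings k)"
proof -
  have "path_cost k s0 (map (\<lambda>t. alg_conf k s0 \<rho> (take (Suc t) rs)) [0..<length rs]) =
      follow_cost k s0 \<rho> rs" for \<rho>
    unfolding follow_cost_def by (intro path_cost_cong) (simp_all add: list_all2_conv_all_nth alg_conf_def)
  then have "alg_cost k s0 (rand_alg k s0) rs =
      measure_pmf.expectation (pmf_of_set (rankings k)) (\<lambda>\<rho>. follow_cost k s0 \<rho> rs)"
    by (simp add: alg_cost_def traj_rand_alg)
  also have "\<dots> = (\<Sum>\<rho>\<in>rankings k. follow_cost k s0 \<rho> rs) / card (rankings k)"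
    by (rule integral_pmf_of_set) simp_all
  finally show ?thesis .
qed

lemma cdist_le_card:
  assumes "finite D" "\<And>i. i < k \<Longrightarrow> i \<notin> D \<Longrightarrow> c i = c' i"
  shows "cdist k c c' \<le> card D"
proof -
  have "{i. i < k \<and> c i \<noteq> c' i} \<subseteq> D" using assms(2) by blast
  then show ?thesis unfolding cdist_def using assms(1) by (simp add: card_mono)
qed

lemma cdist_le: "cdist k c c' \<le> k"
  using cdist_le_card[of "{0..<k}" k c c'] by simp

lemma path_cost_snoc: "path_cost k c (cs @ [x]) = path_cost k c cs + cdist k (last (c # cs)) x"
  by (induction cs arbitrary: c) auto

lemma follow_cost_snoc:
  "follow_cost k s0 \<rho> (rs @ [r]) = follow_cost k s0 \<rho> rs + cdist k (conf k s0 \<rho> rs) (conf k s0 \<rho> (rs @ [r]))"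
proof -
  let ?confs = "\<lambda>rs. map (\<lambda>t. conf k s0 \<rho> (take (Suc t) rs)) [0..<length rs]"
  have "map (\<lambda>t. conf k s0 \<rho> (take (Suc t) (rs @ [r]))) [0..<length rs] = ?confs rs"
    by (intro map_cong) auto
  then have snoc: "?confs (rs @ [r]) = ?confs rs @ [conf k s0 \<rho> (rs @ [r])]"
    by simp
  have last: "last (s0 # ?confs rs) = conf k s0 \<rho> rs"
    by (cases rs rule: rev_exhaust) (simp_all add: last_map)
  show ?thesis unfolding follow_cost_def snoc path_cost_snoc last ..
qed

definition fixed_count :: "nat \<Rightarrow> nat list list \<Rightarrow> gconf list \<Rightarrow> nat" where
  "fixed_count k \<rho> rs = fst (current_state k \<rho> rs)"

definition switches :: "nat \<Rightarrow> nat list list \<Rightarrow> gconf list \<Rightarrow> gconf \<Rightarrow> bool" where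
  "switches k \<rho> rs r \<longleftrightarrow>
     new_phase k (current_phase k rs) r \<or> current_order k \<rho> (rs @ [r]) \<noteq> current_order k \<rho> rs"

lemma conf_snoc_without_switch:
  assumes "k \<ge> 1" "\<not> switches k \<rho> rs r"
  obtains "fixed_count k \<rho> (rs @ [r]) = fixed_count k \<rho> rs"
      "\<And>i. conf k s \<rho> (rs @ [r]) i = conf k s \<rho> rs i"
  | a where "fixed_count k \<rho> (rs @ [r]) = Suc (fixed_count k \<rho> rs)"
      "\<And>i. i \<noteq> a \<Longrightarrow> conf k s \<rho> (rs @ [r]) i = conf k s \<rho> rs i"
proof -
  let ?p = "current_order k \<rho> rs" and ?c = "conf k s \<rho> rs" and ?c' = "conf k s \<rho> (rs @ [r])"
  have "rs \<noteq> []" and phase: "current_phase k (rs @ [r]) = current_phase k rs @ [r]"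
    and order: "current_order k \<rho> (rs @ [r]) = ?p"
    using assms(2) by (auto simp: switches_def current_phase_snoc new_phase_def)
  obtain j f where state: "current_state k \<rho> rs = (j, f)" by fastforce
  obtain j' f' where state': "current_state k \<rho> (rs @ [r]) = (j', f')" by fastforce
  have "follow_step ?p r (Some (j, f)) = Some (j', f')"
    using follow_current_order[OF assms(1), of \<rho>] state state' phase order by (metis follow_snoc)
  moreover have c': "?c' i = (if i \<in> set (take j' ?p) then f' i else ?c i)" for i
    using state' order by (simp add: conf_snoc move_def)
  moreover have c: "?c i = f i" if "i \<in> set (take j ?p)" for i
    using conf_fixed[OF state that \<open>rs \<noteq> []\<close>] .
  ultimately show ?thesis
  proof (cases rule: follow_step_SomeE)
    case served
    then have "?c' i = ?c i" for i using c c' by auto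
    moreover have "fixed_count k \<rho> (rs @ [r]) = fixed_count k \<rho> rs"
      using served state state' by (simp add: fixed_count_def)
    ultimately show ?thesis using that(1) by blast
  next
    case fixed
    then have "set (take j' ?p) = insert (?p ! j) (set (take j ?p))"
      by (simp add: take_Suc_conv_app_nth)
    then have "?c' i = ?c i" if "i \<noteq> ?p ! j" for i using c c' fixed that by auto
    moreover have "fixed_count k \<rho> (rs @ [r]) = Suc (fixed_count k \<rho> rs)"
      using fixed state state' by (simp add: fixed_count_def)
    ultimately show ?thesis using that(2) by blast
  qed
qed

lemma fixed_count_le: "k \<ge> 1 \<Longrightarrow> fixed_count k \<rho> rs \<le> k"
  using current_state_le by (simp add: fixed_count_def)

lemma cost_step:
  assumes "k \<ge> 1"
  shows "cdist k (conf k s0 \<rho> rs) (conf k s0 \<rho> (rs @ [r])) \<le>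
    real (fixed_count k \<rho> (rs @ [r])) - real (fixed_count k \<rho> rs) + 2 * real k * of_bool (switches k \<rho> rs r)"
proof (cases "switches k \<rho> rs r")
  case True
  have "real (fixed_count k \<rho> rs) \<le> k" using fixed_count_le[OF assms] by simp
  moreover have "cdist k (conf k s0 \<rho> rs) (conf k s0 \<rho> (rs @ [r])) \<le> k" by (rule cdist_le)
  ultimately show ?thesis using True by simp
next
  case False
  let ?c = "conf k s0 \<rho> rs" and ?c' = "conf k s0 \<rho> (rs @ [r])"
  show ?thesis
  proof (rule conf_snoc_without_switch[OF assms False, where s = s0])
    assume "fixed_count k \<rho> (rs @ [r]) = fixed_count k \<rho> rs" "\<And>i. ?c' i = ?c i"
    then show ?thesis using False cdist_le_card[of "{}" k ?c ?c'] by simp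
  next
    fix a assume "fixed_count k \<rho> (rs @ [r]) = Suc (fixed_count k \<rho> rs)"
      "\<And>i. i \<noteq> a \<Longrightarrow> ?c' i = ?c i"
    then show ?thesis using False cdist_le_card[of "{a}" k ?c ?c'] by simp
  qed
qed

definition ln_alive :: "nat \<Rightarrow> gconf list \<Rightarrow> real" where
  "ln_alive k rs = ln (card (alive k (current_phase k rs)))"

lemma ln_alive_bounds:
  assumes "k \<ge> 1"
  shows "0 \<le> ln_alive k rs" "ln_alive k rs \<le> ln (fact k)"
proof -
  let ?a = "card (alive k (current_phase k rs))"
  have "?a \<noteq> 0"
    using alive_current_phase_nonempty[OF assms] finite_alive by simp
  then have "1 \<le> real ?a" by simp
  moreover have "real ?a \<le> fact k"
    using card_alive_le[of k "current_phase k rs"] by (metis of_nat_fact of_nat_le_iff)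
  ultimately show "0 \<le> ln_alive k rs" "ln_alive k rs \<le> ln (fact k)"
    unfolding ln_alive_def by simp_all
qed

lemma ln_alive_Nil: "ln_alive k [] = ln (fact k)"
  by (simp add: ln_alive_def alive_Nil)

lemma diff_div_le_ln_diff:
  fixes a b :: real
  assumes "0 < b" "b \<le> a"
  shows "(a - b) / a \<le> ln a - ln b"
proof -
  have "ln (b / a) \<le> b / a - 1" using assms by (intro ln_le_minus_one) auto
  then show ?thesis using assms by (simp add: ln_div diff_divide_distrib)
qed

(* Within a phase the followed order switches only if the first alive order of the ranking dies,
   which by card_first_in_mem happens for a fraction |A - A'| / |A| of the rankings. *)
lemma card_switches_within_phase:
  assumes "k \<ge> 1" "\<not> new_phase k (current_phase k rs) r"
  defines "A \<equiv> alive k (current_phase k rs)" and "A' \<equiv> alive k (current_phase k (rs @ [r]))"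
  shows "card {\<rho> \<in> rankings k. switches k \<rho> rs r} * card A \<le> card (A - A') * card (rankings k)"
proof -
  have sub: "A' \<subseteq> A"
    using assms(2) alive_snoc_subset by (simp add: A_def A'_def current_phase_snoc)
  have A: "A \<subseteq> server_orders k" "A \<noteq> {}"
    using alive_current_phase_nonempty[OF assms(1)] by (auto simp: A_def alive_def)
  have "A' \<noteq> {}" using alive_current_phase_nonempty[OF assms(1)] by (simp add: A'_def)
  have "first_in \<rho> A \<in> A - A'" if "\<rho> \<in> rankings k" "switches k \<rho> rs r" for \<rho>
  proof
    show "first_in \<rho> A \<in> A" using A(2) by (rule first_in_mem)
    have "set \<rho> = server_orders k" using that(1) by (rule permutations_of_setD)
    then have "A' \<inter> set \<rho> \<noteq> {}" using \<open>A' \<noteq> {}\<close> sub A(1) by blast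
    then show "first_in \<rho> A \<notin> A'"
      using that(2) assms(2) first_in_subset[OF sub]
      by (auto simp: switches_def current_order_def A_def A'_def)
  qed
  then have "card {\<rho> \<in> rankings k. switches k \<rho> rs r} \<le> card {\<rho> \<in> rankings k. first_in \<rho> A \<in> A - A'}"
    by (intro card_mono) auto
  then have "card {\<rho> \<in> rankings k. switches k \<rho> rs r} * card A \<le>
      card {\<rho> \<in> rankings k. first_in \<rho> A \<in> A - A'} * card A"
    by (rule mult_le_mono1)
  also have "\<dots> = card (A - A') * card (rankings k)"
    by (rule card_first_in_mem[OF A Diff_subset finite_permutations_of_set])
  finally show ?thesis .
qed

lemma card_switches_le:
  assumes "k \<ge> 1"
  shows "real (card {\<rho> \<in> rankings k. switches k \<rho> rs r}) \<le> card (rankings k) *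
    (ln_alive k rs - ln_alive k (rs @ [r]) + (1 + ln (fact k)) * of_bool (new_phase k (current_phase k rs) r))"
proof (cases "new_phase k (current_phase k rs) r")
  case True
  have "card {\<rho> \<in> rankings k. switches k \<rho> rs r} \<le> card (rankings k)"
    by (intro card_mono) auto
  then have "real (card {\<rho> \<in> rankings k. switches k \<rho> rs r}) \<le> card (rankings k) * (1::real)"
    by (simp only: of_nat_le_iff mult_1_right)
  also have "\<dots> \<le> card (rankings k) * (ln_alive k rs - ln_alive k (rs @ [r]) + (1 + ln (fact k)))"
    using ln_alive_bounds[OF assms, of rs] ln_alive_bounds[OF assms, of "rs @ [r]"]
    by (intro mult_left_mono) auto
  finally show ?thesis using True by simp
next
  case False
  let ?A = "alive k (current_phase k rs)" and ?A' = "alive k (current_phase k (rs @ [r]))"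
  have sub: "?A' \<subseteq> ?A"
    using False alive_snoc_subset by (simp add: current_phase_snoc)
  have a: "0 < card ?A'" "card ?A' \<le> card ?A"
    using alive_current_phase_nonempty[OF assms] finite_alive card_mono[OF finite_alive sub]
    by (auto simp: card_gt_0_iff)
  have "card {\<rho> \<in> rankings k. switches k \<rho> rs r} * card ?A \<le>
      (card ?A - card ?A') * card (rankings k)"
    using card_switches_within_phase[OF assms False] card_Diff_subset[OF finite_alive sub] by simp
  then have "real (card {\<rho> \<in> rankings k. switches k \<rho> rs r} * card ?A) \<le>
      real ((card ?A - card ?A') * card (rankings k))"
    by (simp only: of_nat_le_iff)
  then have "real (card {\<rho> \<in> rankings k. switches k \<rho> rs r}) * card ?A \<le>
      (real (card ?A) - card ?A') * card (rankings k)"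
    using a(2) by (simp only: of_nat_mult of_nat_diff)
  then have "real (card {\<rho> \<in> rankings k. switches k \<rho> rs r}) \<le>
      card (rankings k) * ((real (card ?A) - card ?A') / card ?A)"
    using a by (simp add: field_simps)
  also have "\<dots> \<le> card (rankings k) * (ln_alive k rs - ln_alive k (rs @ [r]))"
    using diff_div_le_ln_diff[of "card ?A'" "card ?A"] a
    by (intro mult_left_mono) (auto simp: ln_alive_def)
  finally show ?thesis using False by simp
qed

lemma fixed_count_Nil: "fixed_count k \<rho> [] = 0"
  by (simp add: fixed_count_def current_state_def)

lemma follow_cost_Nil: "follow_cost k s0 \<rho> [] = 0"
  by (simp add: follow_cost_def)

lemma sum_follow_cost_le:
  assumes "k \<ge> 1"
  shows "(\<Sum>\<rho>\<in>rankings k. follow_cost k s0 \<rho> rs - fixed_count k \<rho> rs) \<le> card (rankings k) * (2 * real k) *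
    (ln (fact k) - ln_alive k rs + (1 + ln (fact k)) * phase_count k rs)"
proof (induction rs rule: rev_induct)
  case Nil
  then show ?case by (simp add: fixed_count_Nil follow_cost_Nil ln_alive_Nil)
next
  case (snoc r rs)
  let ?N = "real (card (rankings k))" and ?L = "ln (fact k)"
  let ?new = "of_bool (new_phase k (current_phase k rs) r) :: real"
  let ?step = "\<lambda>\<rho>. cdist k (conf k s0 \<rho> rs) (conf k s0 \<rho> (rs @ [r])) -
    (real (fixed_count k \<rho> (rs @ [r])) - fixed_count k \<rho> rs)"
  have "(\<Sum>\<rho>\<in>rankings k. follow_cost k s0 \<rho> (rs @ [r]) - fixed_count k \<rho> (rs @ [r])) =
      (\<Sum>\<rho>\<in>rankings k. follow_cost k s0 \<rho> rs - fixed_count k \<rho> rs) + (\<Sum>\<rho>\<in>rankings k. ?step \<rho>)"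
    by (simp add: follow_cost_snoc sum.distrib[symmetric] algebra_simps)
  also have "(\<Sum>\<rho>\<in>rankings k. ?step \<rho>) \<le> (\<Sum>\<rho>\<in>rankings k. 2 * real k * of_bool (switches k \<rho> rs r))"
    using cost_step[OF assms] by (intro sum_mono) (simp add: algebra_simps)
  also have "\<dots> = 2 * real k * card {\<rho> \<in> rankings k. switches k \<rho> rs r}"
    by (simp add: sum_distrib_left[symmetric] Int_def)
  also have "\<dots> \<le> 2 * real k * (?N * (ln_alive k rs - ln_alive k (rs @ [r]) + (1 + ?L) * ?new))"
    using card_switches_le[OF assms] by (intro mult_left_mono) auto
  finally show ?case
    using snoc by (simp add: phase_count_snoc algebra_simps)
qed

lemma alg_cost_rand_alg_le:
  assumes "k \<ge> 1"
  shows "alg_cost k s0 (rand_alg k s0) rs \<le>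
    2 * real k * (1 + ln (fact k)) * phase_count k rs + 2 * real k * ln (fact k) + k"
proof -
  let ?N = "real (card (rankings k))"
  have N: "?N > 0" by (simp add: card_gt_0_iff)
  have "(\<Sum>\<rho>\<in>rankings k. real (fixed_count k \<rho> rs)) \<le> ?N * k"
    using sum_mono[of "rankings k" "\<lambda>\<rho>. real (fixed_count k \<rho> rs)" "\<lambda>_. real k"]
      fixed_count_le[OF assms] by simp
  then have "(\<Sum>\<rho>\<in>rankings k. follow_cost k s0 \<rho> rs) \<le>
      ?N * (2 * real k) * (ln (fact k) - ln_alive k rs + (1 + ln (fact k)) * phase_count k rs) + ?N * k"
    using sum_follow_cost_le[OF assms, of s0 rs] by (simp add: sum_subtractf)
  also have "\<dots> \<le> ?N * (2 * real k * (1 + ln (fact k)) * phase_count k rs + 2 * real k * ln (fact k) + k)"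
    using ln_alive_bounds(1)[OF assms, of rs] N by (simp add: algebra_simps)
  finally show ?thesis
    using N by (simp add: alg_cost_rand_alg divide_le_eq mult.commute)
qed

section \<open>Lower bound on the optimal cost\<close>

lemma path_cost_nonneg: "0 \<le> path_cost k c cs"
  by (induction cs arbitrary: c) (auto simp: cdist_def)

lemma cdist_ge_1:
  assumes "serves k q c" "\<not> serves k q c'"
  shows "1 \<le> cdist k c c'"
proof -
  obtain i where "i < k" "c i = q i" using assms(1) by (auto simp: serves_def)
  then have "c i \<noteq> c' i" using assms(2) by (auto simp: serves_def)
  with \<open>i < k\<close> have "{i. i < k \<and> c i \<noteq> c' i} \<noteq> {}" by blast
  then show ?thesis by (simp add: cdist_def Suc_le_eq card_gt_0_iff)
qed

(* A configuration serving the whole current phase cannot serve the request that ends it, since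
   then some order would survive; so the indicator can pay for the move that ending a phase forces. *)
lemma phase_count_snoc_le:
  assumes "serves k r x" "rs \<noteq> []"
  shows "real (phase_count k (rs @ [r])) + of_bool (\<not> serves_all k (current_phase k (rs @ [r])) x)
    \<le> real (phase_count k rs) + of_bool (\<not> serves_all k (current_phase k rs) y) + cdist k y x"
proof -
  let ?P = "current_phase k rs"
  have "0 \<le> cdist k y x" by (simp add: cdist_def)
  have leave: "1 \<le> of_bool (\<not> serves_all k ?P y) + cdist k y x" if "\<not> serves_all k ?P x"
  proof (cases "serves_all k ?P y")
    case True
    from that obtain q where "q \<in> set ?P" "\<not> serves k q x" by blast
    with True have "1 \<le> cdist k y x" by (intro cdist_ge_1) auto
    then show ?thesis by simp
  qed (use \<open>0 \<le> cdist k y x\<close> in simp)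
  show ?thesis
  proof (cases "new_phase k ?P r")
    case True
    have "\<not> serves_all k ?P x"
    proof
      assume "serves_all k ?P x"
      then have "alive k (?P @ [r]) \<noteq> {}" using assms(1) by (intro alive_nonempty[of _ _ x]) simp
      then show False using True assms(2) by (simp add: new_phase_def current_phase_eq_Nil_iff)
    qed
    then show ?thesis using True leave assms(1) by (simp add: phase_count_snoc current_phase_snoc)
  next
    case False
    show ?thesis
    proof (cases "serves_all k ?P x")
      case True
      then show ?thesis
        using False assms(1) \<open>0 \<le> cdist k y x\<close> by (simp add: phase_count_snoc current_phase_snoc)
    next
      case not_all: False
      then show ?thesis
        using False leave assms(1) by (simp add: phase_count_snoc current_phase_snoc)
    qed
  qed
qed

lemma phase_count_le_path_cost:
  assumes "length cs = length rs" "\<forall>t<length rs. serves k (rs ! t) (cs ! t)"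
  shows "real (phase_count k rs) + of_bool (\<not> serves_all k (current_phase k rs) (last (s0 # cs)))
    \<le> path_cost k s0 cs + 1"
  using assms
proof (induction rs arbitrary: cs rule: rev_induct)
  case (snoc r rs)
  obtain cs0 x where cs: "cs = cs0 @ [x]"
    using snoc.prems(1) by (cases cs rule: rev_exhaust) auto
  have len: "length cs0 = length rs" using snoc.prems(1) cs by simp
  have serves0: "\<forall>t<length rs. serves k (rs ! t) (cs0 ! t)"
  proof (intro allI impI)
    fix t assume "t < length rs"
    then show "serves k (rs ! t) (cs0 ! t)"
      using snoc.prems(2)[rule_format, of t] cs len by (simp add: nth_append)
  qed
  have x: "serves k r x" using snoc.prems(2) cs len by (auto simp: nth_append)
  have cost: "path_cost k s0 cs = path_cost k s0 cs0 + cdist k (last (s0 # cs0)) x"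
    unfolding cs by (rule path_cost_snoc)
  show ?case
  proof (cases "rs = []")
    case True
    then show ?thesis
      using x cs len cost phase_count_snoc[of k "[]" r] current_phase_snoc[of k "[]" r]
      by (simp add: new_phase_def cdist_def)
  next
    case False
    then show ?thesis
      using phase_count_snoc_le[OF x False, of "last (s0 # cs0)"] snoc.IH[OF len serves0] cost cs
      by simp
  qed
qed simp

lemma le_opt_cost:
  assumes "k \<ge> 1" "\<forall>r\<in>set rs. valid_conf k n r"
    and "\<And>cs. length cs = length rs \<Longrightarrow> \<forall>t<length rs. serves k (rs ! t) (cs ! t) \<Longrightarrow>
      b \<le> path_cost k s0 cs"
  shows "b \<le> opt_cost k n s0 rs"
  unfolding opt_cost_def
proof (rule cInf_greatest)
  have "\<forall>t<length rs. valid_conf k n (rs ! t) \<and> serves k (rs ! t) (rs ! t)"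
    using assms(2) serves_self[OF assms(1)] by simp
  then show "{path_cost k s0 cs | cs. length cs = length rs \<and>
      (\<forall>t<length rs. valid_conf k n (cs ! t) \<and> serves k (rs ! t) (cs ! t))} \<noteq> {}" by blast
qed (use assms(3) in auto)

lemma opt_cost_nonneg: "k \<ge> 1 \<Longrightarrow> \<forall>r\<in>set rs. valid_conf k n r \<Longrightarrow> 0 \<le> opt_cost k n s0 rs"
  using le_opt_cost path_cost_nonneg by metis

lemma phase_count_le_opt_cost:
  assumes "k \<ge> 1" "\<forall>r\<in>set rs. valid_conf k n r"
  shows "real (phase_count k rs) \<le> opt_cost k n s0 rs + 1"
proof -
  have "real (phase_count k rs) - 1 \<le> path_cost k s0 cs"
    if "length cs = length rs" "\<forall>t<length rs. serves k (rs ! t) (cs ! t)" for cs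
    using phase_count_le_path_cost[OF that, of s0] by (simp add: of_bool_def split: if_splits)
  then have "real (phase_count k rs) - 1 \<le> opt_cost k n s0 rs" by (rule le_opt_cost[OF assms])
  then show ?thesis by simp
qed

lemma competitive_mono:
  assumes "competitive k n s0 A \<beta>" "\<beta> \<le> \<beta>'" "k \<ge> 1"
  shows "competitive k n s0 A \<beta>'"
proof -
  obtain \<gamma> where \<gamma>: "\<And>rs. \<forall>r\<in>set rs. valid_conf k n r \<Longrightarrow>
      alg_cost k s0 A rs \<le> \<beta> * opt_cost k n s0 rs + \<gamma>"
    using assms(1) by (auto simp: competitive_def)
  show ?thesis unfolding competitive_def
  proof (intro exI allI impI)
    fix rs assume valid: "\<forall>r\<in>set rs. valid_conf k n r"
    have "alg_cost k s0 A rs \<le> \<beta> * opt_cost k n s0 rs + \<gamma>" using valid by (rule \<gamma>)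
    also have "\<dots> \<le> \<beta>' * opt_cost k n s0 rs + \<gamma>"
      using opt_cost_nonneg[OF assms(3) valid] assms(2) by (simp add: mult_right_mono)
    finally show "alg_cost k s0 A rs \<le> \<beta>' * opt_cost k n s0 rs + \<gamma>" .
  qed
qed

lemma rand_alg_competitive:
  assumes "k \<ge> 1"
  shows "competitive k n s0 (rand_alg k s0) (2 * real k * (1 + ln (fact k)))"
  unfolding competitive_def
proof (intro exI allI impI)
  fix rs assume valid: "\<forall>r\<in>set rs. valid_conf k n r"
  let ?a = "2 * real k * (1 + ln (fact k))"
  have "0 \<le> ?a" by (simp add: ln_ge_zero)
  then have "?a * phase_count k rs \<le> ?a * (opt_cost k n s0 rs + 1)"
    using phase_count_le_opt_cost[OF assms valid] by (intro mult_left_mono)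
  then show "alg_cost k s0 (rand_alg k s0) rs \<le> ?a * opt_cost k n s0 rs + (?a + 2 * real k * ln (fact k) + k)"
    using alg_cost_rand_alg_le[OF assms, of s0 rs] by (simp add: algebra_simps)
qed

lemma ln_fact_le:
  assumes "k \<ge> 1"
  shows "ln (fact k) \<le> real k * ln (real k)"
proof -
  have "fact k \<le> real k ^ k" using fact_le_power[of k] by simp
  then have "ln (fact k) \<le> ln (real k ^ k)" by (rule ln_mono) simp
  then show ?thesis using assms by (simp add: ln_realpow)
qed

lemma ratio_le_k_squared_ln_k:
  assumes "k \<ge> 2"
  shows "2 * real k * (1 + ln (fact k)) \<le> 4 * real k ^ 2 * ln (real k)"
proof -
  have "ln 2 \<le> ln (real k)" using assms by (intro ln_mono) auto
  then have "2 / 3 \<le> ln (real k)" using ln2_ge_two_thirds by linarith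
  then have "2 * (2 / 3) \<le> real k * ln (real k)"
    using assms by (intro mult_mono) auto
  then have "1 + ln (fact k) \<le> 2 * (real k * ln (real k))"
    using ln_fact_le[of k] assms by linarith
  then have "2 * real k * (1 + ln (fact k)) \<le> 2 * real k * (2 * (real k * ln (real k)))"
    by (intro mult_left_mono) auto
  then show ?thesis by (simp add: power2_eq_square algebra_simps)
qed

theorem corollary7:
  shows "\<exists>C::real. \<forall>k::nat. k \<ge> 2 \<longrightarrow> (\<forall>n::nat \<Rightarrow> nat. (\<forall>i<k. n i \<ge> 2) \<longrightarrow>
           (\<forall>s0. valid_conf k n s0 \<longrightarrow>
              (\<exists>A. online_alg k n A \<and> competitive k n s0 A (C * real k ^ 2 * ln (real k)))))"
proof (intro exI[of _ 4] allI impI)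
  fix k :: nat and n :: "nat \<Rightarrow> nat" and s0
  (* the algorithm needs no bound on the sizes n i *)
  assume "k \<ge> 2" "valid_conf k n s0"
  then have "k \<ge> 1" by simp
  have "online_alg k n (rand_alg k s0)"
    using rand_alg_online[OF \<open>k \<ge> 1\<close> \<open>valid_conf k n s0\<close>] .
  moreover have "competitive k n s0 (rand_alg k s0) (4 * real k ^ 2 * ln (real k))"
    using rand_alg_competitive[OF \<open>k \<ge> 1\<close>] ratio_le_k_squared_ln_k[OF \<open>k \<ge> 2\<close>] \<open>k \<ge> 1\<close>
    by (rule competitive_mono)
  ultimately show "\<exists>A. online_alg k n A \<and> competitive k n s0 A (4 * real k ^ 2 * ln (real k))"
    by blast
qed

end
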